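(* For all integers $k\geq 2$ and $\ell\geq 2$, $$\lambda(k)\lambda(\ell)=\frac{1}{2^{\ell}}\sum_{i=0}^{k-1}2^{-i}\binom{\ell+i-1}{i}\sigma(\ell+i,k-i)+\frac{1}{2^{k}}\sum_{j=0}^{\ell-1}2^{-j}\binom{k+j-1}{j}\sigma(k+j,\ell-j).$$
   Context: For integers $t\geq 1$, $n\geq 1$ let $S_n^{(t)}=\sum_{k=1}^{n}\frac{1}{(2k-1)^t}$, and for integers $s\geq 2$, $t\geq 1$ let $\sigma(s,t)=\sum_{n\geq 1}\frac{S_n^{(t)}}{n^s}$. For real $s>1$, $\lambda(s)=\sum_{n\geq 1}\frac{1}{(2n-1)^s}$. *)

theory Defs
  imports "HOL-Analysis.Analysis"
begin

definition S_odd :: "nat \<Rightarrow> nat \<Rightarrow> real" where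
  "S_odd t n = (\<Sum>k=1..n. 1 / (2 * real k - 1) ^ t)"

definition sigma_odd :: "nat \<Rightarrow> nat \<Rightarrow> real" where
  "sigma_odd s t = (\<Sum>n. S_odd t (Suc n) / (real (Suc n)) ^ s)"

definition dlambda :: "real \<Rightarrow> real" where
  "dlambda s = (\<Sum>n. 1 / (2 * real (Suc n) - 1) powr s)"

end

(*
  With u = a/(a+b) and v = b/(a+b), the truncated negative binomial series satisfy
    v^l * sum_{i<k} C(l+i-1,i) u^i  +  u^k * sum_{j<l} C(k+j-1,j) v^j  =  1,
  a partial fraction decomposition of 1/(a^k b^l) into the terms 1/(a^(k-i) (a+b)^(l+i)) and
  1/(b^(l-j) (a+b)^(k+j)). Taking a = 2m+1 and b = 2n+1, so that a + b = 2(m+n+1), and summing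
  over all m, n turns the left side into lambda(k) lambda(l) and each family of terms into a
  multiple of some sigma(s,t). All terms are nonnegative, so the double series may be
  rearranged freely.
*)
theory Submission
  imports Defs
begin

(* the first l terms of (1 - v)^(-k) = sum_j C(k+j-1,j) v^j *)
definition neg_binomial_trunc :: "nat \<Rightarrow> nat \<Rightarrow> 'a::comm_ring_1 \<Rightarrow> 'a" where
  "neg_binomial_trunc k l v = (\<Sum>j<l. of_nat ((k + j - 1) choose j) * v ^ j)"

lemma neg_binomial_trunc_Suc_Suc:
  "(1 - v) * neg_binomial_trunc (Suc k) (Suc m) v
     = neg_binomial_trunc k (Suc m) v - of_nat ((k + m) choose k) * v ^ Suc m"
proof (induction m)
  case 0
  show ?case by (simp add: neg_binomial_trunc_def algebra_simps)
next
  case (Suc m)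
  let ?B = neg_binomial_trunc
  have B_Suc: "?B (Suc k) (Suc (Suc m)) v
      = ?B (Suc k) (Suc m) v + of_nat ((k + Suc m) choose Suc m) * v ^ Suc m"
    and B: "?B k (Suc (Suc m)) v = ?B k (Suc m) v + of_nat ((k + m) choose Suc m) * v ^ Suc m"
    by (simp_all add: neg_binomial_trunc_def)
  have pascal: "(k + Suc m) choose (Suc m) = ((k + m) choose k) + ((k + m) choose (Suc m))"
    using binomial_symmetric[of k "k + m"] by simp
  have symmetric: "(k + m) choose m = (k + m) choose k"
    using binomial_symmetric[of k "k + m"] by simp
  have symmetric_Suc: "Suc (k + m) choose k = (k + Suc m) choose (Suc m)"
    using binomial_symmetric[of k "k + Suc m"] by simp
  show ?case
    unfolding B_Suc B distrib_left Suc.IH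
    by (simp add: pascal symmetric symmetric_Suc algebra_simps)
qed

lemma neg_binomial_trunc_0: "neg_binomial_trunc 0 (Suc m) v = 1"
  unfolding neg_binomial_trunc_def sum.lessThan_Suc_shift by (simp add: binomial_eq_0)

lemma neg_binomial_trunc_complementary:
  assumes "u + v = 1" and "l \<ge> 1"
  shows "v ^ l * neg_binomial_trunc l k u + u ^ k * neg_binomial_trunc k l v = 1"
proof -
  obtain m where l: "l = Suc m" using assms(2) by (cases l) auto
  show ?thesis
  proof (induction k)
    case 0
    show ?case by (simp add: l neg_binomial_trunc_0 neg_binomial_trunc_def[of _ 0])
  next
    case (Suc k)
    have u: "u = 1 - v" using assms(1) by (simp add: algebra_simps)
    have rec_u: "neg_binomial_trunc l (Suc k) u
        = neg_binomial_trunc l k u + of_nat ((k + m) choose k) * u ^ k"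
      by (simp add: neg_binomial_trunc_def l add.commute)
    have rec_v: "u * neg_binomial_trunc (Suc k) l v
        = neg_binomial_trunc k l v - of_nat ((k + m) choose k) * v ^ l"
      unfolding u l by (rule neg_binomial_trunc_Suc_Suc)
    have "v ^ l * neg_binomial_trunc l (Suc k) u + u ^ Suc k * neg_binomial_trunc (Suc k) l v
        = v ^ l * neg_binomial_trunc l k u + of_nat ((k + m) choose k) * u ^ k * v ^ l
          + u ^ k * (u * neg_binomial_trunc (Suc k) l v)"
      unfolding rec_u by (simp add: algebra_simps)
    also have "\<dots> = v ^ l * neg_binomial_trunc l k u + u ^ k * neg_binomial_trunc k l v"
      unfolding rec_v by (simp add: algebra_simps)
    finally show ?case using Suc.IH by simp
  qed
qed

lemma partial_fractions_power_product:
  fixes a b :: "'a::field"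
  assumes "a \<noteq> 0" "b \<noteq> 0" "a + b \<noteq> 0" "l \<ge> 1"
  shows "1 / (a ^ k * b ^ l) =
     (\<Sum>i<k. of_nat ((l + i - 1) choose i) / (a ^ (k - i) * (a + b) ^ (l + i)))
   + (\<Sum>j<l. of_nat ((k + j - 1) choose j) / (b ^ (l - j) * (a + b) ^ (k + j)))"
proof -
  have summand: "(y / (x + y)) ^ q * (c * (x / (x + y)) ^ i) / (x ^ p * y ^ q)
      = c / (x ^ (p - i) * (x + y) ^ (q + i))"
    if "x \<noteq> 0" "y \<noteq> 0" "x + y \<noteq> 0" "i < p" for x y c :: 'a and p q i :: nat
  proof -
    obtain d where "p = i + d" using \<open>i < p\<close> less_imp_add_positive by blast
    then show ?thesis using that by (simp add: power_add power_divide field_simps)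
  qed
  define u where "u = a / (a + b)"
  define v where "v = b / (a + b)"
  have "u + v = 1" unfolding u_def v_def add_divide_distrib[symmetric] using assms by simp
  then have "1 / (a ^ k * b ^ l)
      = (v ^ l * neg_binomial_trunc l k u + u ^ k * neg_binomial_trunc k l v) / (a ^ k * b ^ l)"
    using neg_binomial_trunc_complementary assms(4) by metis
  also have "\<dots> = (\<Sum>i<k. v ^ l * (of_nat ((l + i - 1) choose i) * u ^ i) / (a ^ k * b ^ l))
      + (\<Sum>j<l. u ^ k * (of_nat ((k + j - 1) choose j) * v ^ j) / (a ^ k * b ^ l))"
    unfolding neg_binomial_trunc_def add_divide_distrib sum_distrib_left sum_divide_distrib ..
  also have "\<dots> = (\<Sum>i<k. of_nat ((l + i - 1) choose i) / (a ^ (k - i) * (a + b) ^ (l + i)))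
   + (\<Sum>j<l. of_nat ((k + j - 1) choose j) / (b ^ (l - j) * (a + b) ^ (k + j)))"
    unfolding u_def v_def
    using summand[of a b] summand[of b a] assms
    by (intro arg_cong2[where f = "(+)"] sum.cong refl)
       (simp, simp add: add.commute[of b a] mult.commute[of "a ^ k"])
  finally show ?thesis .
qed

lemma has_sum_sum:
  fixes f :: "'i \<Rightarrow> 'a \<Rightarrow> 'b::topological_comm_monoid_add"
  assumes "finite I" and "\<And>i. i \<in> I \<Longrightarrow> (f i has_sum S i) A"
  shows "((\<lambda>x. \<Sum>i\<in>I. f i x) has_sum (\<Sum>i\<in>I. S i)) A"
  using assms by (induction I rule: finite_induct) (simp_all add: has_sum_add)

lemma has_sum_Times_mult_nonneg:
  fixes f g :: "_ \<Rightarrow> real"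
  assumes f: "(f has_sum S) A" and g: "(g has_sum T) B"
    and "\<And>x. x \<in> A \<Longrightarrow> 0 \<le> f x" and "\<And>y. y \<in> B \<Longrightarrow> 0 \<le> g y"
  shows "((\<lambda>(x, y). f x * g y) has_sum S * T) (A \<times> B)"
proof -
  have rows: "((\<lambda>y. f x * g y) has_sum f x * T) B" for x
    by (rule has_sum_cmult_right[OF g])
  have cols: "((\<lambda>x. f x * T) has_sum S * T) A"
    by (rule has_sum_cmult_left[OF f])
  have "(\<lambda>(x, y). f x * g y) summable_on A \<times> B"
    using rows has_sum_imp_summable[OF cols] assms(3,4)
    by (intro summable_on_SigmaI[where g = "\<lambda>x. f x * T"]) auto
  then show ?thesis
    using has_sum_SigmaI[OF _ cols, of "\<lambda>(x, y). f x * g y" "\<lambda>_. B"] rows by simp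
qed

lemma dlambda_has_sum:
  assumes "p \<ge> 2"
  shows "((\<lambda>n. 1 / (2 * real n + 1) ^ p) has_sum dlambda (real p)) UNIV"
proof -
  have "summable (\<lambda>n. inverse (real (Suc n) ^ p))"
    using inverse_power_summable[OF assms] by (subst summable_Suc_iff)
  then have "summable (\<lambda>n. 1 / (2 * real n + 1) ^ p)"
  proof (rule summable_comparison_test'[where N = 0])
    fix n :: nat
    have "real (Suc n) ^ p \<le> (2 * real n + 1) ^ p" by (intro power_mono) auto
    then show "norm (1 / (2 * real n + 1) ^ p) \<le> inverse (real (Suc n) ^ p)"
      by (simp add: divide_simps)
  qed
  moreover have "dlambda (real p) = (\<Sum>n. 1 / (2 * real n + 1) ^ p)"
    unfolding dlambda_def by (simp add: powr_realpow algebra_simps)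
  ultimately show ?thesis
    by (intro sums_nonneg_imp_has_sum) (simp_all add: summable_sums)
qed

lemma S_odd_Suc: "S_odd t (Suc N) = (\<Sum>j\<le>N. 1 / (2 * real j + 1) ^ t)"
proof -
  have "S_odd t (Suc N) = (\<Sum>j=0..N. 1 / (2 * real (Suc j) - 1) ^ t)"
    unfolding S_odd_def
    using sum.shift_bounds_cl_Suc_ivl[of "\<lambda>k. 1 / (2 * real k - 1) ^ t" 0 N] by simp
  then show ?thesis by (simp add: atLeast0AtMost algebra_simps)
qed

(* grouping by N = m + n + 1, the terms with fixed N add up to S_N^(t) / (2N)^s *)
definition sigma_term :: "nat \<Rightarrow> nat \<Rightarrow> nat \<times> nat \<Rightarrow> real" where
  "sigma_term s t = (\<lambda>(m, n). 1 / ((2 * real m + 1) ^ t * (2 * real m + 2 * real n + 2) ^ s))"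

lemma sigma_term_nonneg: "0 \<le> sigma_term s t p"
  by (simp add: sigma_term_def case_prod_beta)

lemma sigma_term_has_sum:
  assumes "sigma_term s t summable_on UNIV"
  shows "(sigma_term s t has_sum sigma_odd s t / 2 ^ s) UNIV"
proof -
  define S where "S = infsum (sigma_term s t) UNIV"
  define h where "h = (\<lambda>(N::nat, j::nat). 1 / ((2 * real j + 1) ^ t * (2 * real N + 2) ^ s))"
  have "(sigma_term s t has_sum S) UNIV"
    using assms S_def by simp
  moreover have "(sigma_term s t has_sum S) UNIV = (h has_sum S) (SIGMA N:UNIV. {..N})"
    by (rule has_sum_reindex_bij_witness[where j = "\<lambda>(m, n). (m + n, m)"
          and i = "\<lambda>(N, j). (j, N - j)"])
       (auto simp: h_def sigma_term_def algebra_simps)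
  ultimately have "(h has_sum S) (SIGMA N:UNIV. {..N})"
    by simp
  then have "((\<lambda>N. \<Sum>j\<le>N. h (N, j)) has_sum S) UNIV"
    by (rule has_sum_SigmaD) (rule has_sum_finiteI, auto)
  then have "(\<lambda>N. 2 ^ s * (\<Sum>j\<le>N. h (N, j))) sums (2 ^ s * S)"
    by (intro sums_mult has_sum_imp_sums)
  moreover have "2 ^ s * (\<Sum>j\<le>N. h (N, j)) = S_odd t (Suc N) / real (Suc N) ^ s" for N
  proof -
    have "(2 * real N + 2) ^ s = 2 ^ s * real (Suc N) ^ s"
      by (simp add: power_mult_distrib[symmetric] algebra_simps)
    then show ?thesis
      unfolding S_odd_Suc h_def sum_divide_distrib by (simp add: sum_distrib_left)
  qed
  ultimately have "sigma_odd s t = 2 ^ s * S"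
    unfolding sigma_odd_def by (metis (no_types, lifting) sums_cong sums_unique)
  with \<open>(sigma_term s t has_sum S) UNIV\<close> show ?thesis by simp
qed

definition sigma_combination :: "nat \<Rightarrow> nat \<Rightarrow> nat \<times> nat \<Rightarrow> real" where
  "sigma_combination k l p = (\<Sum>i<k. real ((l + i - 1) choose i) * sigma_term (l + i) (k - i) p)"

lemma sigma_combination_nonneg: "0 \<le> sigma_combination k l p"
  unfolding sigma_combination_def by (intro sum_nonneg mult_nonneg_nonneg sigma_term_nonneg) simp

lemma odd_power_product_split:
  assumes "l \<ge> 1"
  shows "1 / (2 * real m + 1) ^ k * (1 / (2 * real n + 1) ^ l)
    = sigma_combination k l (m, n) + sigma_combination l k (n, m)"
proof -
  have sums: "(2 * real m + 1) + (2 * real n + 1) = 2 * real m + 2 * real n + 2"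
    "2 * real n + 2 * real m + 2 = 2 * real m + 2 * real n + 2"
    by simp_all
  from partial_fractions_power_product[of "2 * real m + 1" "2 * real n + 1" l k] assms
  show ?thesis
    unfolding sigma_combination_def sigma_term_def by (simp add: sums sum_divide_distrib)
qed

lemma sigma_combination_has_sum:
  assumes "k \<ge> 1" and "l \<ge> 1" and "sigma_combination k l summable_on UNIV"
  shows "(sigma_combination k l has_sum
    1 / 2 ^ l * (\<Sum>i=0..k-1. (1/2) ^ i * real ((l + i - 1) choose i) * sigma_odd (l + i) (k - i))) UNIV"
proof -
  let ?c = "\<lambda>i. real ((l + i - 1) choose i)"
  have "(sigma_term (l + i) (k - i) has_sum sigma_odd (l + i) (k - i) / 2 ^ (l + i)) UNIV"
    if "i < k" for i
  proof (rule sigma_term_has_sum)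
    have "(\<lambda>p. ?c i * sigma_term (l + i) (k - i) p) summable_on UNIV"
    proof (rule summable_on_comparison_test[OF assms(3)])
      show "?c i * sigma_term (l + i) (k - i) p \<le> sigma_combination k l p" for p
        unfolding sigma_combination_def using that
        by (intro member_le_sum[where f = "\<lambda>i. ?c i * sigma_term (l + i) (k - i) p"])
           (simp_all add: sigma_term_nonneg)
    qed (simp add: sigma_term_nonneg)
    moreover have "?c i \<noteq> 0" using assms(2) by simp
    ultimately show "sigma_term (l + i) (k - i) summable_on UNIV"
      by (simp add: summable_on_cmult_right')
  qed
  then have "(sigma_combination k l has_sum
      (\<Sum>i<k. ?c i * (sigma_odd (l + i) (k - i) / 2 ^ (l + i)))) UNIV"
    unfolding sigma_combination_def by (intro has_sum_sum has_sum_cmult_right) auto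
  moreover have "{0..k-1} = {..<k}" using assms(1) by auto
  ultimately show ?thesis
    by (simp add: sum_distrib_left power_add power_divide field_simps)
qed

theorem mainTheorem14:
  fixes k l :: nat
  assumes "k \<ge> 2" and "l \<ge> 2"
  shows "dlambda (real k) * dlambda (real l) =
    1 / 2 ^ l * (\<Sum>i=0..k-1. (1/2) ^ i * real ((l + i - 1) choose i) * sigma_odd (l + i) (k - i))
  + 1 / 2 ^ k * (\<Sum>j=0..l-1. (1/2) ^ j * real ((k + j - 1) choose j) * sigma_odd (k + j) (l - j))"
proof -
  define F where "F = (\<lambda>(m, n). 1 / (2 * real m + 1) ^ k * (1 / (2 * real n + 1) ^ l))"
  have F_has_sum: "(F has_sum dlambda (real k) * dlambda (real l)) UNIV"
    using has_sum_Times_mult_nonneg[OF dlambda_has_sum dlambda_has_sum] assms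
    unfolding F_def by simp
  have F_split: "F = (\<lambda>p. sigma_combination k l p + (\<lambda>(m, n). sigma_combination l k (n, m)) p)"
    unfolding F_def using odd_power_product_split assms by auto
  have summable_kl: "sigma_combination k l summable_on UNIV"
    by (rule summable_on_comparison_test[OF has_sum_imp_summable[OF F_has_sum]])
       (auto simp: F_split sigma_combination_nonneg)
  have "(\<lambda>(m, n). sigma_combination l k (n, m)) summable_on UNIV"
    by (rule summable_on_comparison_test[OF has_sum_imp_summable[OF F_has_sum]])
       (auto simp: F_split sigma_combination_nonneg)
  then have summable_lk: "sigma_combination l k summable_on UNIV"
    using summable_on_swap[of "sigma_combination l k" UNIV UNIV] by simp
  have swap: "((\<lambda>(m, n). sigma_combination l k (n, m)) has_sum S) UNIV"
    if "(sigma_combination l k has_sum S) UNIV" for S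
    using that has_sum_swap[where f = "sigma_combination l k" and A = UNIV and B = UNIV] by simp
  from assms have "k \<ge> 1" "l \<ge> 1" by simp_all
  from has_sum_add[OF sigma_combination_has_sum[OF this summable_kl]
      swap[OF sigma_combination_has_sum[OF this(2,1) summable_lk]], folded F_split]
  show ?thesis
    by (rule has_sum_unique[OF F_has_sum])
qed

end
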